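(* Let $X$ be an infinite h-homogeneous zero-dimensional compact Hausdorff space, let $\alpha=(A_1,\dots,A_n)$ be an ordered partition of $X$ into nonempty clopen sets, and let $\upsilon\in\Phi(X)$. Then $\upsilon\in\mathfrak U_\alpha$ if and only if the induced order $<_\upsilon$ on $\{A_1,\dots,A_n\}$ satisfies $A_i<_\upsilon A_j\iff i<j$. In particular $\upsilon\in\mathfrak U_{t^*_\upsilon(\alpha)}$.
   Context: h-homogeneous: every nonempty clopen subset of $X$ is homeomorphic to $X$. $\mathrm{Exp}(X)$ is the space of nonempty closed subsets of $X$ with the Vietoris topology; $\Phi(X)\subset\mathrm{Exp}(\mathrm{Exp}(X))$ is the space of maximal chains (maximal families in $\mathrm{Exp}(X)$ totally ordered by inclusion). For open sets $U_1,\dots,U_k$ of a space $Y$, $\langle U_1,\dots,U_k\rangle=\{F\in\mathrm{Exp}(Y): F\cap U_i\ne\emptyset\ \forall i,\ F\subset\bigcup_i U_i\}$. For $\alpha=(A_1,\dots,A_n)$ set $\mathcal U_j=\langle A_1,\dots,A_j\rangle\subset \mathrm{Exp}(X)$ and $\mathfrak U_\alpha=\langle\mathcal U_1,\dots,\mathcal U_n\rangle\subset\mathrm{Exp}(\mathrm{Exp}(X))$. For $\upsilon\in\Phi(X)$ and nonempty closed $D$, $D_\upsilon=\bigcap\{A\in\upsilon:A\cap D\ne\emptyset\}$; the induced order is $A_i<_\upsilon A_j$ iff $(A_i)_\upsilon\subseteq(A_j)_\upsilon$, and $t^*_\upsilon(\alpha)$ is the ordered partition listing $A_1,\dots,A_n$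 in increasing $<_\upsilon$-order. *)

theory Defs
  imports "HOL-Analysis.Analysis"
begin

definition h_homogeneous :: "'a topology \<Rightarrow> bool" where
  "h_homogeneous X \<longleftrightarrow>
     (\<forall>C. closedin X C \<and> openin X C \<and> C \<noteq> {} \<longrightarrow> subtopology X C homeomorphic_space X)"

definition Exp :: "'a topology \<Rightarrow> 'a set set" where
  "Exp X = {F. closedin X F \<and> F \<noteq> {}}"

definition vietoris :: "'a topology \<Rightarrow> 'a set topology" where
  "vietoris X = subtopology
     (topology_generated_by ({{F. F \<subseteq> U} | U. openin X U} \<union> {{F. F \<inter> U \<noteq> {}} | U. openin X U}))
     (Exp X)"

definition vbrack :: "'a topology \<Rightarrow> 'a set list \<Rightarrow> 'a set set" where
  "vbrack Y Us = {F \<in> Exp Y. (\<forall>U\<in>set Us. F \<inter> U \<noteq> {}) \<and> F \<subseteq> \<Union>(set Us)}"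

definition is_chain :: "'a set set \<Rightarrow> bool" where
  "is_chain C \<longleftrightarrow> (\<forall>A\<in>C. \<forall>B\<in>C. A \<subseteq> B \<or> B \<subseteq> A)"

definition Phi :: "'a topology \<Rightarrow> 'a set set set" where
  "Phi X = {v. v \<subseteq> Exp X \<and> is_chain v \<and>
                (\<forall>c. c \<subseteq> Exp X \<and> is_chain c \<and> v \<subseteq> c \<longrightarrow> c = v)}"

definition frakU :: "'a topology \<Rightarrow> 'a set list \<Rightarrow> 'a set set set" where
  "frakU X As = vbrack (vietoris X) (map (\<lambda>j. vbrack X (take j As)) [1..<Suc (length As)])"

definition chain_sub :: "'a set set \<Rightarrow> 'a set \<Rightarrow> 'a set" where
  "chain_sub v D = \<Inter>{A \<in> v. A \<inter> D \<noteq> {}}"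

definition t_star :: "'a set set \<Rightarrow> 'a set list \<Rightarrow> 'a set list" where
  "t_star v As = (THE Bs. mset Bs = mset As \<and>
                   sorted_wrt (\<lambda>A B. chain_sub v A \<subset> chain_sub v B) Bs)"

end

theory Submission
  imports Defs
begin

(*
  For a block A of the partition, A_v is the least member of the maximal chain v meeting A;
  it exists by compactness. Disjoint clopen blocks A, B have different A_v, B_v: if both equal D,
  the closure of the union of the members strictly below D misses the open set A \<union> B, whereas
  maximality leaves at most one point of D outside that closure.

  Since v is closed in the Vietoris topology, v \<in> \<U>_\<alpha> says that each bracket
  \<langle>A_1,...,A_j\<rangle> contains a member of v and each member lies in some bracket. If the
  (A_j)_v increase with j, then (A_j)_v itself lies in the j-th bracket, and a member F lies in
  the bracket of the last block it meets. Conversely, a member F of the i-th bracket satisfies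
  (A_i)_v \<subseteq> F \<subset> (A_j)_v for every j > i.
*)

lemma Phi_closedin: "v \<in> Phi X \<Longrightarrow> E \<in> v \<Longrightarrow> closedin X E"
  and Phi_nonempty: "v \<in> Phi X \<Longrightarrow> E \<in> v \<Longrightarrow> E \<noteq> {}"
  unfolding Phi_def Exp_def by auto

lemma Phi_comparable: "v \<in> Phi X \<Longrightarrow> A \<in> v \<Longrightarrow> B \<in> v \<Longrightarrow> A \<subseteq> B \<or> B \<subseteq> A"
  unfolding Phi_def is_chain_def by auto

lemma Phi_maximal:
  assumes "v \<in> Phi X" "G \<in> Exp X" "\<forall>E\<in>v. E \<subseteq> G \<or> G \<subseteq> E"
  shows "G \<in> v"
proof -
  have "insert G v \<subseteq> Exp X" "is_chain (insert G v)"
    using assms unfolding Phi_def is_chain_def by auto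
  then have "insert G v = v"
    using assms(1) unfolding Phi_def by blast
  then show ?thesis by blast
qed

lemma topspace_in_Phi:
  assumes "v \<in> Phi X" "topspace X \<noteq> {}"
  shows "topspace X \<in> v"
proof (rule Phi_maximal[OF assms(1)])
  show "topspace X \<in> Exp X"
    using assms(2) unfolding Exp_def by simp
  show "\<forall>E\<in>v. E \<subseteq> topspace X \<or> topspace X \<subseteq> E"
    using Phi_closedin[OF assms(1)] closedin_subset by blast
qed

lemma compact_space_Inter_chain_nonempty:
  assumes "compact_space X" "\<forall>C\<in>\<C>. closedin X C \<and> C \<noteq> {}" "subset.chain \<A> \<C>"
  shows "\<Inter>\<C> \<noteq> {}"
proof -
  have closed: "\<forall>C\<in>\<C>. closedin X C"
    using assms(2) by blast
  have fip: "\<forall>\<F>. finite \<F> \<and> \<F> \<subseteq> \<C> \<longrightarrow> \<Inter>\<F> \<noteq> {}"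
  proof (intro allI impI, elim conjE)
    fix \<F> assume \<F>: "finite \<F>" "\<F> \<subseteq> \<C>"
    show "\<Inter>\<F> \<noteq> {}"
    proof (cases "\<F> = {}")
      case False
      have "subset.chain \<A> \<F>"
        using assms(3) \<F>(2) unfolding subset.chain_def by blast
      then show ?thesis
        using Inter_in_chain[OF \<F>(1) False] \<F>(2) assms(2) by blast
    qed simp
  qed
  show ?thesis
    using assms(1)[unfolded compact_space_fip, rule_format, OF conjI[OF closed fip]] .
qed

lemma chain_sub_least: "E \<in> v \<Longrightarrow> E \<inter> D \<noteq> {} \<Longrightarrow> chain_sub v D \<subseteq> E"
  unfolding chain_sub_def by blast

lemma chain_sub_meets:
  assumes "compact_space X" "v \<in> Phi X" "closedin X D" "D \<noteq> {}"
  shows "chain_sub v D \<inter> D \<noteq> {}"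
proof -
  define S where "S = {A \<in> v. A \<inter> D \<noteq> {}}"
  have "topspace X \<in> S"
    using assms closedin_subset[OF assms(3)] topspace_in_Phi unfolding S_def by blast
  have "subset.chain UNIV ((\<lambda>A. A \<inter> D) ` S)"
    using Phi_comparable[OF assms(2)] unfolding S_def subset.chain_def by blast
  moreover have "\<forall>C\<in>(\<lambda>A. A \<inter> D) ` S. closedin X C \<and> C \<noteq> {}"
    using Phi_closedin[OF assms(2)] assms(3) unfolding S_def by blast
  ultimately have "\<Inter>((\<lambda>A. A \<inter> D) ` S) \<noteq> {}"
    using compact_space_Inter_chain_nonempty[OF assms(1)] by blast
  moreover have "\<Inter>((\<lambda>A. A \<inter> D) ` S) \<subseteq> chain_sub v D \<inter> D"
    using \<open>topspace X \<in> S\<close> unfolding chain_sub_def S_def by blast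
  ultimately show ?thesis
    by blast
qed

lemma chain_sub_in_Phi:
  assumes "compact_space X" "v \<in> Phi X" "closedin X D" "D \<noteq> {}"
  shows "chain_sub v D \<in> v"
proof (rule Phi_maximal[OF assms(2)])
  have "topspace X \<in> {A \<in> v. A \<inter> D \<noteq> {}}"
    using assms closedin_subset[OF assms(3)] topspace_in_Phi by blast
  then have "closedin X (chain_sub v D)"
    unfolding chain_sub_def by (intro closedin_Inter) (auto dest: Phi_closedin[OF assms(2)])
  then show "chain_sub v D \<in> Exp X"
    using chain_sub_meets[OF assms] unfolding Exp_def by auto
  show "\<forall>E\<in>v. E \<subseteq> chain_sub v D \<or> chain_sub v D \<subseteq> E"
    using Phi_comparable[OF assms(2)] unfolding chain_sub_def by blast
qed

text \<open>Adding a missed point \<open>a\<close> to the closure gives a closed set comparable with every member,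
  hence a member strictly below \<open>D\<close> (it misses \<open>b\<close>) that is not contained in the closure.\<close>
lemma Phi_closure_below_gap:
  assumes "t1_space X" "v \<in> Phi X" "D \<in> v"
    and C: "C = X closure_of \<Union>{E \<in> v. E \<subset> D}"
    and a: "a \<in> D" "a \<notin> C" and b: "b \<in> D" "b \<notin> C"
  shows "a = b"
proof (rule ccontr)
  assume "a \<noteq> b"
  have "closedin X D"
    using Phi_closedin assms(2,3) .
  then have "C \<subseteq> D"
    unfolding C by (intro closure_of_minimal) auto
  have below: "\<Union>{E \<in> v. E \<subset> D} \<subseteq> C"
    unfolding C using \<open>closedin X D\<close> closedin_subset by (intro closure_of_subset) blast
  have "closedin X {a}"
    using closedin_t1_singleton[OF assms(1)] a(1) \<open>closedin X D\<close> closedin_subset by blast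
  then have "closedin X (insert a C)"
    using closedin_Un[of X "{a}" C] unfolding C by simp
  moreover have "E \<subseteq> insert a C \<or> insert a C \<subseteq> E" if "E \<in> v" for E
  proof (cases "D \<subseteq> E")
    case True
    then show ?thesis
      using \<open>C \<subseteq> D\<close> a(1) by blast
  next
    case False
    then have "E \<subset> D"
      using Phi_comparable[OF assms(2) that assms(3)] by blast
    then show ?thesis
      using that below by blast
  qed
  ultimately have "insert a C \<in> v"
    by (intro Phi_maximal[OF assms(2)]) (auto simp: Exp_def)
  moreover have "insert a C \<subset> D"
    using \<open>C \<subseteq> D\<close> \<open>a \<noteq> b\<close> a(1) b by blast
  ultimately show False
    using below a(2) by blast
qed

lemma chain_sub_disjoint_clopen_neq:
  assumes "compact_space X" "t1_space X" "v \<in> Phi X"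
    and A: "closedin X A" "openin X A" "A \<noteq> {}"
    and B: "closedin X B" "openin X B" "B \<noteq> {}"
    and "A \<inter> B = {}"
  shows "chain_sub v A \<noteq> chain_sub v B"
proof
  assume eq: "chain_sub v A = chain_sub v B"
  define D where "D = chain_sub v A"
  define C where "C = X closure_of \<Union>{E \<in> v. E \<subset> D}"
  have "E \<subseteq> topspace X - (A \<union> B)" if "E \<in> v" "E \<subset> D" for E
  proof -
    have "E \<inter> A = {}" "E \<inter> B = {}"
      using chain_sub_least[OF that(1), of A] chain_sub_least[OF that(1), of B] that(2) eq
      unfolding D_def by blast+
    moreover have "E \<subseteq> topspace X"
      using Phi_closedin[OF assms(3) that(1)] closedin_subset by blast
    ultimately show ?thesis
      by blast
  qed
  moreover have "closedin X (topspace X - (A \<union> B))"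
    using A(2) B(2) by (intro closedin_diff closedin_topspace openin_Un)
  ultimately have "C \<subseteq> topspace X - (A \<union> B)"
    unfolding C_def by (intro closure_of_minimal) auto
  moreover obtain a b where "a \<in> D" "a \<in> A" "b \<in> D" "b \<in> B"
    using chain_sub_meets[OF assms(1,3) A(1,3)] chain_sub_meets[OF assms(1,3) B(1,3)] eq
    unfolding D_def by blast
  moreover have "D \<in> v"
    unfolding D_def using chain_sub_in_Phi[OF assms(1,3) A(1,3)] .
  ultimately have "a = b"
    using Phi_closure_below_gap[OF assms(2,3) _ C_def] by blast
  with \<open>a \<in> A\<close> \<open>b \<in> B\<close> assms(10) show False
    by blast
qed

lemma topspace_vietoris: "topspace (vietoris X) = Exp X"
proof -
  have "F \<in> {F. F \<subseteq> topspace X}" if "F \<in> Exp X" for F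
    using that closedin_subset unfolding Exp_def by auto
  then show ?thesis
    unfolding vietoris_def by auto
qed

lemma openin_vietoris_hit_inside:
  assumes "openin X U" "openin X V"
  shows "openin (vietoris X) {F \<in> Exp X. F \<inter> U \<noteq> {} \<and> F \<subseteq> V}"
proof -
  let ?\<S> = "{{F. F \<subseteq> U} | U. openin X U} \<union> {{F. F \<inter> U \<noteq> {}} | U. openin X U}"
  have "openin (topology_generated_by ?\<S>) ({F. F \<inter> U \<noteq> {}} \<inter> {F. F \<subseteq> V})"
    by (intro openin_Int topology_generated_by_Basis) (use assms in auto)
  then show ?thesis
    unfolding vietoris_def openin_subtopology by blast
qed

lemma Phi_closedin_vietoris:
  assumes "regular_space X" "v \<in> Phi X"
  shows "closedin (vietoris X) v"
proof -
  have "\<exists>N. openin (vietoris X) N \<and> F \<in> N \<and> N \<subseteq> Exp X - v" if F: "F \<in> Exp X - v" for F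
  proof -
    obtain A where A: "A \<in> v" "\<not> A \<subseteq> F" "\<not> F \<subseteq> A"
      using F Phi_maximal[OF assms(2)] by blast
    then obtain x y where xy: "x \<in> F" "x \<notin> A" "y \<in> A" "y \<notin> F"
      by blast
    have "closedin X A" "closedin X F"
      using Phi_closedin[OF assms(2) A(1)] F unfolding Exp_def by auto
    then have "x \<in> topspace X - A" "y \<in> topspace X - F"
      using xy closedin_subset by blast+
    then obtain U1 V1 U2 V2 where
      U1: "openin X U1" "x \<in> U1" and V1: "A \<subseteq> V1" "disjnt U1 V1" and
      U2: "y \<in> U2" "disjnt U2 V2" and V2: "openin X V2" "F \<subseteq> V2"
      using assms(1) \<open>closedin X A\<close> \<open>closedin X F\<close> unfolding regular_space_def by meson
    define N where "N = {G \<in> Exp X. G \<inter> U1 \<noteq> {} \<and> G \<subseteq> V2}"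
    have "G \<notin> v" if "G \<in> N" for G
      using Phi_comparable[OF assms(2) _ A(1), of G] that xy(3) U1 V1 U2 V2
      unfolding N_def disjnt_def by blast
    moreover have "openin (vietoris X) N"
      unfolding N_def using openin_vietoris_hit_inside[OF U1(1) V2(1)] .
    moreover have "F \<in> N"
      using F xy(1) U1(2) V2(2) unfolding N_def by blast
    ultimately show ?thesis
      unfolding N_def by blast
  qed
  moreover have "v \<subseteq> Exp X"
    using assms(2) unfolding Phi_def by blast
  ultimately show ?thesis
    unfolding closedin_def topspace_vietoris by (subst openin_subopen) blast
qed

lemma Phi_in_Exp_vietoris:
  assumes "regular_space X" "v \<in> Phi X" "topspace X \<noteq> {}"
  shows "v \<in> Exp (vietoris X)"
  using Phi_closedin_vietoris[OF assms(1,2)] topspace_in_Phi[OF assms(2,3)] unfolding Exp_def by auto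

lemma mem_vbrack_take_iff:
  assumes "j \<le> length Bs"
  shows "F \<in> vbrack X (take j Bs) \<longleftrightarrow>
           F \<in> Exp X \<and> (\<forall>i<j. F \<inter> Bs ! i \<noteq> {}) \<and> (\<forall>x\<in>F. \<exists>i<j. x \<in> Bs ! i)"
proof -
  have "set (take j Bs) = (!) Bs ` {..<j}"
    using nth_image[OF assms] by (simp add: lessThan_atLeast0)
  then show ?thesis
    unfolding vbrack_def by auto
qed

lemma mem_frakU_iff:
  assumes "v \<in> Exp (vietoris X)"
  shows "v \<in> frakU X Bs \<longleftrightarrow>
           (\<forall>m<length Bs. \<exists>F\<in>v. F \<in> vbrack X (take (Suc m) Bs)) \<and>
           (\<forall>F\<in>v. \<exists>m<length Bs. F \<in> vbrack X (take (Suc m) Bs))"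
proof -
  define W where "W j = vbrack X (take j Bs)" for j
  have "set [1..<Suc (length Bs)] = Suc ` {..<length Bs}"
    by (simp only: set_upt lessThan_atLeast0 image_Suc_atLeastLessThan) simp
  then have "v \<in> frakU X Bs \<longleftrightarrow>
      (\<forall>U\<in>W ` Suc ` {..<length Bs}. v \<inter> U \<noteq> {}) \<and> v \<subseteq> \<Union>(W ` Suc ` {..<length Bs})"
    unfolding frakU_def vbrack_def[of "vietoris X"] set_map W_def using assms by simp
  also have "\<dots> \<longleftrightarrow> (\<forall>m<length Bs. \<exists>F\<in>v. F \<in> W (Suc m)) \<and> (\<forall>F\<in>v. \<exists>m<length Bs. F \<in> W (Suc m))"
    by blast
  finally show ?thesis
    unfolding W_def .
qed

lemma index_order_iff_sorted_wrt_psubset: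
  "(\<forall>i<length xs. \<forall>j<length xs. i \<noteq> j \<longrightarrow> (f (xs ! i) \<subseteq> f (xs ! j) \<longleftrightarrow> i < j)) \<longleftrightarrow>
     sorted_wrt (\<lambda>a b. f a \<subset> f b) xs" (is "?index_order \<longleftrightarrow> ?sorted")
proof
  assume index_order: ?index_order
  show ?sorted
    unfolding sorted_wrt_iff_nth_less
  proof (intro allI impI)
    fix i j assume "i < j" "j < length xs"
    with index_order have "f (xs ! i) \<subseteq> f (xs ! j)" "\<not> f (xs ! j) \<subseteq> f (xs ! i)"
      by auto
    then show "f (xs ! i) \<subset> f (xs ! j)"
      by blast
  qed
next
  assume ?sorted
  then have less: "f (xs ! i) \<subset> f (xs ! j)" if "i < j" "j < length xs" for i j
    using that unfolding sorted_wrt_iff_nth_less by blast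
  show ?index_order
  proof (intro allI impI)
    fix i j assume "i < length xs" "j < length xs" "i \<noteq> j"
    then show "f (xs ! i) \<subseteq> f (xs ! j) \<longleftrightarrow> i < j"
      using less[of i j] less[of j i] by (cases "i < j") auto
  qed
qed

lemma sorted_wrt_psubset_unique:
  assumes "sorted_wrt (\<lambda>a b. f a \<subset> f b) xs" "sorted_wrt (\<lambda>a b. f a \<subset> f b) ys" "mset xs = mset ys"
  shows "xs = ys"
  using assms
proof (induction xs arbitrary: ys)
  case (Cons x xs)
  obtain y ys' where ys: "ys = y # ys'"
    using Cons.prems(3) by (cases ys) auto
  have "x = y"
  proof (rule ccontr)
    assume "x \<noteq> y"
    then have "x \<in> set ys'" "y \<in> set xs"
      using Cons.prems(3) ys by (metis list.set_intros set_ConsD mset_eq_setD)+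
    then show False
      using Cons.prems(1,2) ys by auto
  qed
  then show ?case
    using Cons ys by simp
qed simp

text \<open>Sorting by the number of strictly smaller entries realises the strict order.\<close>
lemma sorted_wrt_psubset_exists:
  assumes "distinct xs" "inj_on f (set xs)"
    and comparable: "\<forall>a\<in>set xs. \<forall>b\<in>set xs. f a \<subseteq> f b \<or> f b \<subseteq> f a"
  obtains ys where "mset ys = mset xs" "sorted_wrt (\<lambda>a b. f a \<subset> f b) ys"
proof -
  define rank where "rank a = card {b \<in> set xs. f b \<subset> f a}" for a
  define ys where "ys = sort_key rank xs"
  have ys: "mset ys = mset xs" "distinct ys" "set ys = set xs"
    using assms(1) mset_eq_setD unfolding ys_def by auto
  have less: "f a \<subset> f b" if "a \<in> set xs" "b \<in> set xs" "a \<noteq> b" "rank a \<le> rank b" for a b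
  proof (rule ccontr)
    assume "\<not> f a \<subset> f b"
    then have "f b \<subset> f a"
      using comparable assms(2) that(1-3) unfolding inj_on_def by blast
    then have "insert b {c \<in> set xs. f c \<subset> f b} \<subseteq> {c \<in> set xs. f c \<subset> f a}"
      using that(2) by auto
    then have "card (insert b {c \<in> set xs. f c \<subset> f b}) \<le> rank a"
      unfolding rank_def by (intro card_mono) auto
    then show False
      using that(4) unfolding rank_def by (subst (asm) card_insert_disjoint) auto
  qed
  have "sorted_wrt (\<lambda>a b. f a \<subset> f b) ys"
    unfolding sorted_wrt_iff_nth_less
  proof (intro allI impI)
    fix i j assume "i < j" "j < length ys"
    moreover have "sorted (map rank ys)"
      unfolding ys_def by simp
    ultimately show "f (ys ! i) \<subset> f (ys ! j)"
      using ys(2,3) by (intro less) (auto simp: sorted_iff_nth_mono nth_eq_iff_index_eq)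
  qed
  with ys(1) show ?thesis
    using that by blast
qed

definition clopen_partition :: "'a topology \<Rightarrow> 'a set list \<Rightarrow> bool" where
  "clopen_partition X As \<longleftrightarrow>
     (\<forall>A\<in>set As. closedin X A \<and> openin X A \<and> A \<noteq> {}) \<and>
     (\<forall>i<length As. \<forall>j<length As. i \<noteq> j \<longrightarrow> As ! i \<inter> As ! j = {}) \<and>
     \<Union>(set As) = topspace X"

lemma index_disjoint_iff_distinct_pairwise:
  assumes "\<forall>A\<in>set As. A \<noteq> {}"
  shows "(\<forall>i<length As. \<forall>j<length As. i \<noteq> j \<longrightarrow> As ! i \<inter> As ! j = {}) \<longleftrightarrow>
           distinct As \<and> pairwise disjnt (set As)" (is "?index_disjoint \<longleftrightarrow> _")
proof
  assume disj: ?index_disjoint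
  have "As ! i \<inter> As ! j = {}" "As ! i \<noteq> {}"
    if "i < length As" "j < length As" "i \<noteq> j" for i j
    using disj[rule_format, OF that] assms nth_mem[OF that(1)] by auto
  then have "distinct As"
    unfolding distinct_conv_nth by fastforce
  moreover have "A \<inter> B = {}" if AB: "A \<in> set As" "B \<in> set As" "A \<noteq> B" for A B
  proof -
    obtain i j where "i < length As" "As ! i = A" "j < length As" "As ! j = B"
      using AB(1,2) by (metis in_set_conv_nth)
    with AB(3) show ?thesis
      using disj by blast
  qed
  then have "pairwise disjnt (set As)"
    unfolding pairwise_def disjnt_def by blast
  ultimately show "distinct As \<and> pairwise disjnt (set As)" ..
next
  assume "distinct As \<and> pairwise disjnt (set As)"
  then show ?index_disjoint
    unfolding pairwise_def disjnt_def by (simp add: nth_eq_iff_index_eq)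
qed

lemma clopen_partition_iff:
  "clopen_partition X As \<longleftrightarrow>
     (\<forall>A\<in>set As. closedin X A \<and> openin X A \<and> A \<noteq> {}) \<and>
     distinct As \<and> pairwise disjnt (set As) \<and> \<Union>(set As) = topspace X"
proof (cases "\<forall>A\<in>set As. A \<noteq> {}")
  case True
  show ?thesis
    unfolding clopen_partition_def index_disjoint_iff_distinct_pairwise[OF True] by (simp only: conj_assoc)
next
  case False
  then show ?thesis
    unfolding clopen_partition_def by blast
qed

lemma clopen_partition_mset:
  assumes "clopen_partition X As" "mset Bs = mset As"
  shows "clopen_partition X Bs"
proof -
  have "set Bs = set As" "distinct Bs \<longleftrightarrow> distinct As"
    using assms(2) by (metis mset_eq_setD, metis mset_eq_imp_distinct_iff)
  then show ?thesis
    using assms(1) unfolding clopen_partition_iff by simp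
qed

locale chain_over_clopen_partition =
  fixes X :: "'a topology" and v :: "'a set set" and Bs :: "'a set list"
  assumes compact: "compact_space X" and Hausdorff: "Hausdorff_space X"
    and nonempty: "topspace X \<noteq> {}"
    and maximal_chain: "v \<in> Phi X" and partition: "clopen_partition X Bs"
begin

abbreviation level :: "nat \<Rightarrow> 'a set" where
  "level i \<equiv> chain_sub v (Bs ! i)"

lemma clopen_block:
  assumes "i < length Bs"
  shows "closedin X (Bs ! i)" "openin X (Bs ! i)" "Bs ! i \<noteq> {}"
  using partition nth_mem[OF assms] unfolding clopen_partition_def by blast+

lemma disjoint_blocks: "i < length Bs \<Longrightarrow> j < length Bs \<Longrightarrow> i \<noteq> j \<Longrightarrow> Bs ! i \<inter> Bs ! j = {}"
  using partition unfolding clopen_partition_def by blast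

lemma block_cover:
  assumes "x \<in> topspace X"
  obtains k where "k < length Bs" "x \<in> Bs ! k"
proof -
  have "x \<in> \<Union>(set Bs)"
    using partition assms unfolding clopen_partition_def by simp
  then show ?thesis
    using that by (metis UnionE in_set_conv_nth)
qed

lemma level_in_chain: "i < length Bs \<Longrightarrow> level i \<in> v"
  using chain_sub_in_Phi[OF compact maximal_chain clopen_block(1,3)] .

lemma level_meets_block: "i < length Bs \<Longrightarrow> level i \<inter> Bs ! i \<noteq> {}"
  using chain_sub_meets[OF compact maximal_chain clopen_block(1,3)] .

lemma level_subset_topspace: "i < length Bs \<Longrightarrow> level i \<subseteq> topspace X"
  using closedin_subset[OF Phi_closedin[OF maximal_chain level_in_chain]] .

lemma level_neq: "i < length Bs \<Longrightarrow> j < length Bs \<Longrightarrow> i \<noteq> j \<Longrightarrow> level i \<noteq> level j"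
  using chain_sub_disjoint_clopen_neq[OF compact Hausdorff_imp_t1_space[OF Hausdorff] maximal_chain
      clopen_block(1-3) clopen_block(1-3) disjoint_blocks] .

lemma vbrack_iff:
  "m < length Bs \<Longrightarrow> F \<in> vbrack X (take (Suc m) Bs) \<longleftrightarrow>
     F \<in> Exp X \<and> (\<forall>i\<le>m. F \<inter> Bs ! i \<noteq> {}) \<and> (\<forall>x\<in>F. \<exists>i\<le>m. x \<in> Bs ! i)"
  using mem_vbrack_take_iff[of "Suc m" Bs] by (simp add: less_Suc_eq_le)

lemma chain_in_Exp_vietoris: "v \<in> Exp (vietoris X)"
  using Phi_in_Exp_vietoris[OF compact_Hausdorff_imp_regular_space[OF compact Hausdorff]
      maximal_chain nonempty] .

lemma frakU_imp_level_less:
  assumes "v \<in> frakU X Bs" "i < j" "j < length Bs"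
  shows "level i \<subset> level j"
proof -
  have i: "i < length Bs"
    using assms(2,3) by simp
  then obtain F where F: "F \<in> v" "F \<in> vbrack X (take (Suc i) Bs)"
    using assms(1) mem_frakU_iff[OF chain_in_Exp_vietoris] by blast
  then have "F \<inter> Bs ! i \<noteq> {}" and F_blocks: "\<forall>x\<in>F. \<exists>k\<le>i. x \<in> Bs ! k"
    using vbrack_iff[OF i] by auto
  then have "level i \<subseteq> F"
    using chain_sub_least[OF F(1)] by blast
  have "F \<inter> Bs ! j = {}"
  proof (rule ccontr)
    assume "F \<inter> Bs ! j \<noteq> {}"
    then obtain x k where "x \<in> Bs ! j" "k \<le> i" "x \<in> Bs ! k"
      using F_blocks by blast
    then show False
      using disjoint_blocks[of k j] assms(2,3) by force
  qed
  then have "F \<subseteq> level j"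
    using Phi_comparable[OF maximal_chain F(1) level_in_chain[OF assms(3)]]
      level_meets_block[OF assms(3)] by blast
  with \<open>level i \<subseteq> F\<close> have "level i \<subseteq> level j"
    by blast
  then show ?thesis
    using level_neq[OF i assms(3)] assms(2) by blast
qed

context
  assumes level_less: "\<And>i j. i < j \<Longrightarrow> j < length Bs \<Longrightarrow> level i \<subset> level j"
begin

lemma below_level_meets_block:
  assumes "i \<le> m" "m < length Bs" "level m \<subseteq> F"
  shows "F \<inter> Bs ! i \<noteq> {}"
proof -
  have "level i \<subseteq> level m"
    using level_less[of i m] assms(1,2) by (cases "i = m") auto
  then show ?thesis
    using level_meets_block[of i] assms by auto
qed

lemma level_in_vbrack:
  assumes "m < length Bs"
  shows "level m \<in> vbrack X (take (Suc m) Bs)"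
proof -
  have "level m \<in> Exp X"
    using level_in_chain[OF assms] Phi_closedin[OF maximal_chain] Phi_nonempty[OF maximal_chain]
    unfolding Exp_def by blast
  moreover have "\<exists>i\<le>m. x \<in> Bs ! i" if x: "x \<in> level m" for x
  proof -
    obtain k where k: "k < length Bs" "x \<in> Bs ! k"
      using block_cover level_subset_topspace[OF assms] x by blast
    then have "level k \<subseteq> level m"
      using chain_sub_least[OF level_in_chain[OF assms]] x by blast
    then have "k \<le> m"
      using level_less[of m k] k(1) by (cases "m < k") auto
    with k show ?thesis
      by blast
  qed
  ultimately show ?thesis
    using vbrack_iff[OF assms] below_level_meets_block[OF _ assms] by blast
qed

lemma chain_member_in_vbrack:
  assumes "F \<in> v"
  obtains m where "m < length Bs" "F \<in> vbrack X (take (Suc m) Bs)"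
proof -
  define K where "K = {k. k < length Bs \<and> F \<inter> Bs ! k \<noteq> {}}"
  have cover: "\<exists>k\<in>K. x \<in> Bs ! k" if x: "x \<in> F" for x
  proof -
    have "x \<in> topspace X"
      using closedin_subset[OF Phi_closedin[OF maximal_chain assms]] x by blast
    then show ?thesis
      using block_cover x unfolding K_def by blast
  qed
  define m where "m = Max K"
  have "K \<noteq> {}"
    using cover Phi_nonempty[OF maximal_chain assms] by blast
  moreover have "finite K"
    unfolding K_def by simp
  ultimately have m: "m \<in> K" "\<And>k. k \<in> K \<Longrightarrow> k \<le> m"
    unfolding m_def by auto
  then have "m < length Bs" "level m \<subseteq> F"
    using chain_sub_least[OF assms] unfolding K_def by auto
  moreover have "F \<in> Exp X"
    using Phi_closedin[OF maximal_chain assms] Phi_nonempty[OF maximal_chain assms]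
    unfolding Exp_def by blast
  moreover have "\<exists>i\<le>m. x \<in> Bs ! i" if "x \<in> F" for x
    using cover[OF that] m(2) by blast
  ultimately have "F \<in> vbrack X (take (Suc m) Bs)"
    using vbrack_iff below_level_meets_block by blast
  with \<open>m < length Bs\<close> show ?thesis
    by (rule that)
qed

end

lemma mem_frakU_iff_sorted:
  "v \<in> frakU X Bs \<longleftrightarrow> sorted_wrt (\<lambda>A B. chain_sub v A \<subset> chain_sub v B) Bs"
proof
  assume "v \<in> frakU X Bs"
  then show "sorted_wrt (\<lambda>A B. chain_sub v A \<subset> chain_sub v B) Bs"
    unfolding sorted_wrt_iff_nth_less using frakU_imp_level_less by blast
next
  assume "sorted_wrt (\<lambda>A B. chain_sub v A \<subset> chain_sub v B) Bs"
  then have less: "\<And>i j. i < j \<Longrightarrow> j < length Bs \<Longrightarrow> level i \<subset> level j"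
    unfolding sorted_wrt_iff_nth_less by blast
  have "\<forall>m<length Bs. \<exists>F\<in>v. F \<in> vbrack X (take (Suc m) Bs)"
    using level_in_vbrack[OF less] level_in_chain by blast
  moreover have "\<forall>F\<in>v. \<exists>m<length Bs. F \<in> vbrack X (take (Suc m) Bs)"
    using chain_member_in_vbrack[OF less] by metis
  ultimately show "v \<in> frakU X Bs"
    using mem_frakU_iff[OF chain_in_Exp_vietoris] by blast
qed

lemma t_star:
  "mset (t_star v Bs) = mset Bs" "sorted_wrt (\<lambda>A B. chain_sub v A \<subset> chain_sub v B) (t_star v Bs)"
proof -
  have "distinct Bs"
    using partition unfolding clopen_partition_iff by blast
  moreover have "inj_on (chain_sub v) (set Bs)"
  proof (rule inj_onI)
    fix A B assume "A \<in> set Bs" "B \<in> set Bs" "chain_sub v A = chain_sub v B"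
    then show "A = B"
      using level_neq by (metis in_set_conv_nth)
  qed
  moreover have "\<forall>A\<in>set Bs. \<forall>B\<in>set Bs. chain_sub v A \<subseteq> chain_sub v B \<or> chain_sub v B \<subseteq> chain_sub v A"
    using level_in_chain Phi_comparable[OF maximal_chain] by (metis in_set_conv_nth)
  ultimately obtain Cs where Cs: "mset Cs = mset Bs" "sorted_wrt (\<lambda>A B. chain_sub v A \<subset> chain_sub v B) Cs"
    by (rule sorted_wrt_psubset_exists)
  have "t_star v Bs = Cs"
    unfolding t_star_def
  proof (rule the_equality)
    show "mset Cs = mset Bs \<and> sorted_wrt (\<lambda>A B. chain_sub v A \<subset> chain_sub v B) Cs"
      using Cs by blast
    fix Ds assume "mset Ds = mset Bs \<and> sorted_wrt (\<lambda>A B. chain_sub v A \<subset> chain_sub v B) Ds"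
    then show "Ds = Cs"
      using sorted_wrt_psubset_unique[of "chain_sub v" Ds Cs] Cs by simp
  qed
  with Cs show "mset (t_star v Bs) = mset Bs"
    "sorted_wrt (\<lambda>A B. chain_sub v A \<subset> chain_sub v B) (t_star v Bs)"
    by simp_all
qed

end

theorem lemma3p4:
  fixes X :: "'a topology" and As :: "'a set list" and v :: "'a set set"
  assumes "infinite (topspace X)"
    and "h_homogeneous X"
    and "X dim_le 0"
    and "compact_space X"
    and "Hausdorff_space X"
    and "\<forall>A\<in>set As. closedin X A \<and> openin X A \<and> A \<noteq> {}"
    and "\<forall>i<length As. \<forall>j<length As. i \<noteq> j \<longrightarrow> As ! i \<inter> As ! j = {}"
    and "\<Union>(set As) = topspace X"
    and "v \<in> Phi X"
  shows "(v \<in> frakU X As \<longleftrightarrow>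
           (\<forall>i<length As. \<forall>j<length As. i \<noteq> j \<longrightarrow>
              (chain_sub v (As ! i) \<subseteq> chain_sub v (As ! j) \<longleftrightarrow> i < j)))
         \<and> v \<in> frakU X (t_star v As)"
proof -
  have nonempty: "topspace X \<noteq> {}"
    using assms(1) by auto
  have partition: "clopen_partition X As"
    using assms(6-8) unfolding clopen_partition_def by blast
  interpret As: chain_over_clopen_partition X v As
    using assms(4,5,9) nonempty partition by (simp add: chain_over_clopen_partition_def)
  have "clopen_partition X (t_star v As)"
    using clopen_partition_mset[OF partition As.t_star(1)] .
  then interpret sorted: chain_over_clopen_partition X v "t_star v As"
    using assms(4,5,9) nonempty by (simp add: chain_over_clopen_partition_def)
  show ?thesis
    using As.mem_frakU_iff_sorted sorted.mem_frakU_iff_sorted As.t_star(2)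
      index_order_iff_sorted_wrt_psubset[of As "chain_sub v"] by blast
qed

end
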